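(* A morphism in $\mathbf{MetCH_{sep}}$ is a regular monomorphism if and only if it is an embedding.
   Context: A metric on a set $X$ is a map $d\colon X\times X\to[0,\infty]$ with $d(x,x)=0$ and $d(x,z)\le d(x,y)+d(y,z)$ (not necessarily symmetric, $\infty$ allowed); separated means $d(x,y)=0=d(y,x)$ implies $x=y$. A separated metric compact Hausdorff space is a compact Hausdorff space with a separated metric $d\colon X\times X\to[0,\infty]$ continuous with respect to the upper topology on $[0,\infty]$ (open sets $]u,\infty]$, plus $\emptyset$ and $[0,\infty]$). $\mathbf{MetCH_{sep}}$ has these spaces as objects and continuous non-expansive maps ($d_Y(f(x),f(y))\le d_X(x,y)$) as morphisms. An embedding is an injective morphism $f\colon X\to Y$ with $d_X(x,y)=d_Y(f(x),f(y))$ for all $x,y\in X$. *)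

theory Defs
  imports "HOL-Analysis.Analysis"
begin

definition upper_topology :: "ennreal topology" where
  "upper_topology = topology (\<lambda>S. S = {} \<or> S = UNIV \<or> (\<exists>u. S = {u<..}))"

definition metCH_sep :: "'a topology \<Rightarrow> ('a \<Rightarrow> 'a \<Rightarrow> ennreal) \<Rightarrow> bool" where
  "metCH_sep T d \<longleftrightarrow>
     compact_space T \<and> Hausdorff_space T \<and>
     (\<forall>x\<in>topspace T. d x x = 0) \<and>
     (\<forall>x\<in>topspace T. \<forall>y\<in>topspace T. \<forall>z\<in>topspace T. d x z \<le> d x y + d y z) \<and>
     (\<forall>x\<in>topspace T. \<forall>y\<in>topspace T. d x y = 0 \<and> d y x = 0 \<longrightarrow> x = y) \<and>
     continuous_map (prod_topology T T) upper_topology (\<lambda>(x, y). d x y)"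

definition metCH_hom ::
  "'a topology \<Rightarrow> ('a \<Rightarrow> 'a \<Rightarrow> ennreal) \<Rightarrow> 'b topology \<Rightarrow> ('b \<Rightarrow> 'b \<Rightarrow> ennreal) \<Rightarrow> ('a \<Rightarrow> 'b) \<Rightarrow> bool" where
  "metCH_hom T d S e f \<longleftrightarrow>
     continuous_map T S f \<and> (\<forall>x\<in>topspace T. \<forall>y\<in>topspace T. e (f x) (f y) \<le> d x y)"

definition metCH_embedding ::
  "'a topology \<Rightarrow> ('a \<Rightarrow> 'a \<Rightarrow> ennreal) \<Rightarrow> 'b topology \<Rightarrow> ('b \<Rightarrow> 'b \<Rightarrow> ennreal) \<Rightarrow> ('a \<Rightarrow> 'b) \<Rightarrow> bool" where
  "metCH_embedding T d S e f \<longleftrightarrow>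
     metCH_hom T d S e f \<and> inj_on f (topspace T) \<and>
     (\<forall>x\<in>topspace T. \<forall>y\<in>topspace T. e (f x) (f y) = d x y)"

text \<open>Regular monomorphism: f is an equalizer of some parallel pair g, h : Y \<rightarrow> Z
  in MetCH_sep. Since HOL cannot quantify over types inside a formula, the type
  'c of the codomain object Z and the type 'w of the test objects W are explicit
  parameters. Morphisms are identified when they agree on the carrier.\<close>
definition regular_mono ::
  "'c itself \<Rightarrow> 'w itself \<Rightarrow> 'a topology \<Rightarrow> ('a \<Rightarrow> 'a \<Rightarrow> ennreal) \<Rightarrow>
   'b topology \<Rightarrow> ('b \<Rightarrow> 'b \<Rightarrow> ennreal) \<Rightarrow> ('a \<Rightarrow> 'b) \<Rightarrow> bool" where
  "regular_mono (_ :: 'c itself) (_ :: 'w itself) T d S e f \<longleftrightarrow>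
     metCH_hom T d S e f \<and>
     (\<exists>(R :: 'c topology) (r :: 'c \<Rightarrow> 'c \<Rightarrow> ennreal) g h.
        metCH_sep R r \<and> metCH_hom S e R r g \<and> metCH_hom S e R r h \<and>
        (\<forall>x\<in>topspace T. g (f x) = h (f x)) \<and>
        (\<forall>(W :: 'w topology) (dW :: 'w \<Rightarrow> 'w \<Rightarrow> ennreal) k.
           metCH_sep W dW \<and> metCH_hom W dW S e k \<and>
           (\<forall>w\<in>topspace W. g (k w) = h (k w)) \<longrightarrow>
           (\<exists>u. metCH_hom W dW T d u \<and> (\<forall>w\<in>topspace W. f (u w) = k w) \<and>
                (\<forall>u'. metCH_hom W dW T d u' \<and> (\<forall>w\<in>topspace W. f (u' w) = k w) \<longrightarrow>
                      (\<forall>w\<in>topspace W. u' w = u w)))))"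

end

theory Submission
  imports Defs
begin

text \<open>A regular monomorphism is an equalizer, so every map into S whose image lies in
  the image of f lifts uniquely through f. Lifting a constant map from a one-point space
  shows that f is injective; lifting f itself, viewed as a map from T with the metric
  pulled back along f, shows that the identity of T is non-expansive for that metric,
  i.e. f preserves distances. Conversely, an embedding f is the equalizer of the two
  inclusions of S into the double of S along the compact set A = f(T): two copies of S
  glued along A, with distance e inside a copy and inf over a in A of e(y,a) + e(a,y')
  across the copies. Compactness of A makes this metric separated (the infimum is
  attained) and, via the tube lemma, continuous for the upper topology.\<close>

section \<open>Lower semicontinuous functions into [0,\<infinity>]\<close>

lemma istopology_upper:
  "istopology (\<lambda>S::ennreal set. S = {} \<or> S = UNIV \<or> (\<exists>u. S = {u<..}))"
  unfolding istopology_def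
proof (intro conjI allI impI)
  fix S T :: "ennreal set"
  assume "S = {} \<or> S = UNIV \<or> (\<exists>u. S = {u<..})" and "T = {} \<or> T = UNIV \<or> (\<exists>u. T = {u<..})"
  moreover have "{u<..} \<inter> {v<..} = {max u v<..}" for u v :: ennreal
    by auto
  ultimately show "S \<inter> T = {} \<or> S \<inter> T = UNIV \<or> (\<exists>u. S \<inter> T = {u<..})"
    by (metis Int_UNIV_left Int_UNIV_right Int_empty_left Int_empty_right)
next
  fix K :: "ennreal set set"
  assume K: "\<forall>S\<in>K. S = {} \<or> S = UNIV \<or> (\<exists>u. S = {u<..})"
  show "\<Union>K = {} \<or> \<Union>K = UNIV \<or> (\<exists>u. \<Union>K = {u<..})"
  proof (cases "UNIV \<in> K")
    case False
    have "\<Union>K = {Inf {u. {u<..} \<in> K}<..}"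
    proof (intro set_eqI iffI)
      fix x assume "x \<in> \<Union>K"
      with K False obtain u where "{u<..} \<in> K" "u < x"
        by (metis UnionE empty_iff greaterThan_iff)
      then show "x \<in> {Inf {u. {u<..} \<in> K}<..}"
        by (auto intro: le_less_trans[OF Inf_lower])
    qed (auto simp: Inf_less_iff)
    then show ?thesis by blast
  qed blast
qed

lemma openin_upper_topology:
  "openin upper_topology S \<longleftrightarrow> S = {} \<or> S = UNIV \<or> (\<exists>u. S = {u<..})"
  unfolding upper_topology_def using istopology_upper by simp

lemma topspace_upper_topology [simp]: "topspace upper_topology = UNIV"
  unfolding topspace_def openin_upper_topology by auto

lemma continuous_map_upper_topology_iff:
  "continuous_map X upper_topology \<phi> \<longleftrightarrow> (\<forall>u. openin X {x \<in> topspace X. u < \<phi> x})"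
proof -
  have rays: "{x \<in> topspace X. \<phi> x \<in> {u<..}} = {x \<in> topspace X. u < \<phi> x}" for u
    by simp
  show ?thesis
  proof
    assume "continuous_map X upper_topology \<phi>"
    then show "\<forall>u. openin X {x \<in> topspace X. u < \<phi> x}"
      unfolding continuous_map_def openin_upper_topology rays[symmetric] by blast
  next
    assume H: "\<forall>u. openin X {x \<in> topspace X. u < \<phi> x}"
    show "continuous_map X upper_topology \<phi>"
      unfolding continuous_map_def openin_upper_topology
    proof (intro conjI allI impI)
      fix U :: "ennreal set"
      assume "U = {} \<or> U = UNIV \<or> (\<exists>u. U = {u<..})"
      then show "openin X {x \<in> topspace X. \<phi> x \<in> U}"
        using H rays by auto
    qed auto
  qed
qed

lemma continuous_map_upper_topology_localI:
  assumes "\<And>x u. x \<in> topspace X \<Longrightarrow> u < \<phi> x \<Longrightarrow>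
             \<exists>U. openin X U \<and> x \<in> U \<and> (\<forall>z\<in>U. u < \<phi> z)"
  shows "continuous_map X upper_topology \<phi>"
  unfolding continuous_map_upper_topology_iff
proof
  fix u
  show "openin X {x \<in> topspace X. u < \<phi> x}"
  proof (subst openin_subopen, intro ballI)
    fix x assume "x \<in> {x \<in> topspace X. u < \<phi> x}"
    then obtain U where U: "openin X U" "x \<in> U" "\<forall>z\<in>U. u < \<phi> z"
      using assms by blast
    with openin_subset[OF U(1)]
    show "\<exists>U. openin X U \<and> x \<in> U \<and> U \<subseteq> {x \<in> topspace X. u < \<phi> x}"
      by blast
  qed
qed

lemma continuous_map_upper_topology_openin:
  "continuous_map X upper_topology \<phi> \<Longrightarrow> openin X {x \<in> topspace X. u < \<phi> x}"
  unfolding continuous_map_upper_topology_iff by blast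

lemma continuous_map_upper_topology_minorant:
  assumes \<phi>: "continuous_map X upper_topology \<phi>" and V: "openin X V" "x \<in> V"
    and below: "\<forall>z\<in>V. \<phi> z \<le> \<psi> z" and "\<phi> x = \<psi> x" "u < \<psi> x"
  shows "\<exists>U. openin X U \<and> x \<in> U \<and> (\<forall>z\<in>U. u < \<psi> z)"
proof -
  let ?U = "{z \<in> topspace X. u < \<phi> z} \<inter> V"
  have "openin X ?U"
    using continuous_map_upper_topology_openin[OF \<phi>] V(1) by (rule openin_Int)
  moreover have "x \<in> ?U"
    using assms openin_subset[OF V(1)] by auto
  moreover have "\<forall>z\<in>?U. u < \<psi> z"
    using below by (auto intro: less_le_trans)
  ultimately show ?thesis
    by blast
qed

lemma ennreal_less_add_approx:
  fixes s t u :: ennreal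
  assumes "u < s + t"
  shows "\<exists>\<alpha>. (\<alpha> = 0 \<or> \<alpha> < s) \<and> u < \<alpha> + t"
proof (cases "s = 0")
  case False
  then have "{..<s} \<noteq> {}"
    by (metis lessThan_iff empty_iff zero_less_iff_neq_zero)
  then have "s + t = (SUP \<alpha>\<in>{..<s}. \<alpha> + t)"
    using ennreal_SUP_add_left[of "{..<s}" "\<lambda>\<alpha>. \<alpha>" t] by simp
  with assms obtain \<alpha> where "\<alpha> < s" "u < \<alpha> + t"
    using less_SUP_iff[of u "\<lambda>\<alpha>. \<alpha> + t" "{..<s}"] by auto
  then show ?thesis by blast
next
  case True
  with assms show ?thesis
    by (intro exI[of _ 0]) simp
qed

lemma ennreal_less_add_split:
  fixes s t u :: ennreal
  assumes "u < s + t"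
  shows "\<exists>\<alpha> \<beta>. u < \<alpha> + \<beta> \<and> (\<alpha> = 0 \<or> \<alpha> < s) \<and> (\<beta> = 0 \<or> \<beta> < t)"
proof -
  obtain \<alpha> where \<alpha>: "\<alpha> = 0 \<or> \<alpha> < s" "u < t + \<alpha>"
    using ennreal_less_add_approx[OF assms] by (auto simp: add.commute)
  obtain \<beta> where "\<beta> = 0 \<or> \<beta> < t" "u < \<beta> + \<alpha>"
    using ennreal_less_add_approx[OF \<alpha>(2)] by blast
  with \<alpha>(1) show ?thesis
    by (auto simp: add.commute)
qed

lemma ennreal_INF_add_const:
  fixes c :: ennreal
  shows "(INF a\<in>K. f a) + c = (INF a\<in>K. f a + c)"
proof (cases "K = {}")
  case False
  have "(\<lambda>x. x + c) (Inf (f ` K)) = (INF s\<in>f ` K. s + c)"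
    by (rule continuous_at_Inf_mono)
      (use False in \<open>auto simp: mono_def add_right_mono intro!: continuous_intros\<close>)
  then show ?thesis
    by (simp add: image_comp)
qed simp

lemma continuous_map_upper_topology_add:
  assumes \<phi>: "continuous_map X upper_topology \<phi>" and \<psi>: "continuous_map X upper_topology \<psi>"
  shows "continuous_map X upper_topology (\<lambda>x. \<phi> x + \<psi> x)"
proof (rule continuous_map_upper_topology_localI)
  have lower_bound: "\<exists>U. openin X U \<and> x \<in> U \<and> (\<forall>z\<in>U. c \<le> \<rho> z)"
    if "continuous_map X upper_topology \<rho>" "x \<in> topspace X" "c = 0 \<or> c < \<rho> x" for \<rho> x c
    using that continuous_map_upper_topology_openin[OF that(1), of c]
    by (metis (mono_tags, lifting) less_imp_le mem_Collect_eq openin_topspace zero_le)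
  fix x u assume x: "x \<in> topspace X" and "u < \<phi> x + \<psi> x"
  then obtain \<alpha> \<beta> where "u < \<alpha> + \<beta>" "\<alpha> = 0 \<or> \<alpha> < \<phi> x" "\<beta> = 0 \<or> \<beta> < \<psi> x"
    using ennreal_less_add_split by blast
  moreover obtain U V where "openin X U" "x \<in> U" "\<forall>z\<in>U. \<alpha> \<le> \<phi> z"
    and "openin X V" "x \<in> V" "\<forall>z\<in>V. \<beta> \<le> \<psi> z"
    using lower_bound[OF \<phi> x] lower_bound[OF \<psi> x] calculation(2,3) by metis
  ultimately show "\<exists>W. openin X W \<and> x \<in> W \<and> (\<forall>z\<in>W. u < \<phi> z + \<psi> z)"
    by (intro exI[of _ "U \<inter> V"]) (auto intro: less_le_trans add_mono)
qed

lemma continuous_map_upper_topology_INF_compact: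
  assumes F: "continuous_map (prod_topology X Y) upper_topology F" and K: "compactin Y K"
  shows "continuous_map X upper_topology (\<lambda>x. INF a\<in>K. F (x, a))"
proof (rule continuous_map_upper_topology_localI)
  fix x u assume x: "x \<in> topspace X" and "u < (INF a\<in>K. F (x, a))"
  then obtain u' where u': "u < u'" "u' < (INF a\<in>K. F (x, a))"
    using dense by blast
  let ?W = "{p \<in> topspace (prod_topology X Y). u' < F p}"
  have "{x} \<times> K \<subseteq> ?W"
  proof
    fix p assume "p \<in> {x} \<times> K"
    then obtain a where p: "p = (x, a)" "a \<in> K"
      by blast
    have "u' < F (x, a)"
      using u'(2) INF_lower[OF p(2)] by (rule less_le_trans)
    moreover have "a \<in> topspace Y"
      using compactin_subset_topspace[OF K] p(2) by blast
    ultimately show "p \<in> ?W"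
      using x by (simp add: p(1))
  qed
  from tube_lemma_right[OF continuous_map_upper_topology_openin[OF F] K x this]
  obtain U V where UV: "openin X U" "x \<in> U" "K \<subseteq> V" "U \<times> V \<subseteq> ?W"
    by blast
  have "u < (INF a\<in>K. F (z, a))" if "z \<in> U" for z
  proof -
    have "u' \<le> (INF a\<in>K. F (z, a))"
    proof (rule INF_greatest)
      fix a assume "a \<in> K"
      with UV that have "(z, a) \<in> ?W"
        by blast
      then show "u' \<le> F (z, a)"
        by (simp add: less_imp_le)
    qed
    with u'(1) show ?thesis
      by (rule less_le_trans)
  qed
  with UV show "\<exists>U. openin X U \<and> x \<in> U \<and> (\<forall>z\<in>U. u < (INF a\<in>K. F (z, a)))"
    by blast
qed

lemma continuous_map_upper_topology_attains_INF:
  assumes K: "compactin Y K" "K \<noteq> {}" and \<psi>: "continuous_map Y upper_topology \<psi>"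
  shows "\<exists>a\<in>K. \<psi> a = (INF a\<in>K. \<psi> a)"
proof (rule ccontr)
  define m where "m = (INF a\<in>K. \<psi> a)"
  assume "\<not> ?thesis"
  then have above: "\<forall>a\<in>K. m < \<psi> a"
    unfolding m_def by (metis INF_lower order_less_le)
  define B where "B c = {y \<in> topspace Y. c < \<psi> y}" for c
  have "K \<subseteq> \<Union>(B ` {m<..})"
    using above compactin_subset_topspace[OF K(1)] dense unfolding B_def by fastforce
  moreover have "\<forall>U\<in>B ` {m<..}. openin Y U"
    using continuous_map_upper_topology_openin[OF \<psi>] unfolding B_def by blast
  ultimately obtain \<F> where "finite \<F>" "\<F> \<subseteq> B ` {m<..}" "K \<subseteq> \<Union>\<F>"
    using K(1) unfolding compactin_def by meson
  then obtain C where C: "C \<subseteq> {m<..}" "finite C" "K \<subseteq> \<Union>(B ` C)"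
    by (metis finite_subset_image)
  then have "C \<noteq> {}" using K(2) by auto
  have "Min C \<le> \<psi> a" if "a \<in> K" for a
    using C that unfolding B_def by (force intro: order.trans[OF Min_le] less_imp_le)
  then have "Min C \<le> m"
    unfolding m_def by (rule INF_greatest)
  moreover have "m < Min C"
    using C \<open>C \<noteq> {}\<close> by auto
  ultimately show False by simp
qed

section \<open>Regular monomorphisms are embeddings\<close>

lemma metCH_sep_dist_self: "metCH_sep S e \<Longrightarrow> x \<in> topspace S \<Longrightarrow> e x x = 0"
  unfolding metCH_sep_def by blast

lemma metCH_sep_triangle:
  "metCH_sep S e \<Longrightarrow> x \<in> topspace S \<Longrightarrow> y \<in> topspace S \<Longrightarrow> z \<in> topspace S \<Longrightarrow>
    e x z \<le> e x y + e y z"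
  unfolding metCH_sep_def by blast

lemma metCH_sep_separated:
  "metCH_sep S e \<Longrightarrow> x \<in> topspace S \<Longrightarrow> y \<in> topspace S \<Longrightarrow> e x y = 0 \<Longrightarrow> e y x = 0 \<Longrightarrow> x = y"
  unfolding metCH_sep_def by blast

lemma continuous_map_metCH_dist:
  assumes "metCH_sep S e" "continuous_map X S f" "continuous_map X S g"
  shows "continuous_map X upper_topology (\<lambda>x. e (f x) (g x))"
proof -
  have "continuous_map (prod_topology S S) upper_topology (\<lambda>(x, y). e x y)"
    using assms(1) unfolding metCH_sep_def by blast
  from continuous_map_compose[OF continuous_map_pairedI[OF assms(2,3)] this]
  show ?thesis
    by (simp add: o_def)
qed

lemma metCH_hom_image: "metCH_hom T d S e f \<Longrightarrow> x \<in> topspace T \<Longrightarrow> f x \<in> topspace S"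
  unfolding metCH_hom_def using continuous_map_image_subset_topspace by blast

lemma metCH_sep_singleton: "metCH_sep (discrete_topology {a}) (\<lambda>_ _. 0)"
  unfolding metCH_sep_def continuous_map_upper_topology_iff
  by (simp add: compact_space_discrete_topology)

lemma metCH_sep_pullback:
  assumes "metCH_sep S e" "compact_space T" "Hausdorff_space T"
    and f: "continuous_map T S f" "inj_on f (topspace T)"
  shows "metCH_sep T (\<lambda>x y. e (f x) (f y))"
proof -
  have fS: "f x \<in> topspace S" if "x \<in> topspace T" for x
    using f(1) that continuous_map_image_subset_topspace by blast
  have "continuous_map (prod_topology T T) S (\<lambda>p. f (fst p))"
    "continuous_map (prod_topology T T) S (\<lambda>p. f (snd p))"
    using continuous_map_compose[OF continuous_map_fst f(1)]
      continuous_map_compose[OF continuous_map_snd f(1)]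
    by (simp_all add: o_def)
  then have "continuous_map (prod_topology T T) upper_topology (\<lambda>p. e (f (fst p)) (f (snd p)))"
    by (rule continuous_map_metCH_dist[OF assms(1)])
  then show ?thesis
    unfolding metCH_sep_def case_prod_unfold
  proof (intro conjI ballI impI)
    fix x y z assume "x \<in> topspace T" "y \<in> topspace T" "z \<in> topspace T"
    then show "e (f x) (f z) \<le> e (f x) (f y) + e (f y) (f z)"
      using fS metCH_sep_triangle[OF assms(1)] by blast
  next
    fix x y assume "x \<in> topspace T" "y \<in> topspace T" "e (f x) (f y) = 0 \<and> e (f y) (f x) = 0"
    then show "x = y"
      using fS metCH_sep_separated[OF assms(1)] inj_onD[OF f(2)] by metis
  qed (use assms(2,3) fS metCH_sep_dist_self[OF assms(1)] in auto)
qed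

definition factors_uniquely ::
  "'w topology \<Rightarrow> ('w \<Rightarrow> 'w \<Rightarrow> ennreal) \<Rightarrow> 'a topology \<Rightarrow> ('a \<Rightarrow> 'a \<Rightarrow> ennreal) \<Rightarrow>
   ('a \<Rightarrow> 'b) \<Rightarrow> ('w \<Rightarrow> 'b) \<Rightarrow> bool" where
  "factors_uniquely W dW T d f k \<longleftrightarrow>
     (\<exists>u. metCH_hom W dW T d u \<and> (\<forall>w\<in>topspace W. f (u w) = k w) \<and>
          (\<forall>u'. metCH_hom W dW T d u' \<and> (\<forall>w\<in>topspace W. f (u' w) = k w) \<longrightarrow>
                (\<forall>w\<in>topspace W. u' w = u w)))"

lemma regular_mono_iff:
  "regular_mono TYPE('c) TYPE('w) T d S e f \<longleftrightarrow>
     metCH_hom T d S e f \<and>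
     (\<exists>(R :: 'c topology) r g h.
        metCH_sep R r \<and> metCH_hom S e R r g \<and> metCH_hom S e R r h \<and>
        (\<forall>x\<in>topspace T. g (f x) = h (f x)) \<and>
        (\<forall>(W :: 'w topology) dW k.
           metCH_sep W dW \<and> metCH_hom W dW S e k \<and> (\<forall>w\<in>topspace W. g (k w) = h (k w)) \<longrightarrow>
           factors_uniquely W dW T d f k))"
  unfolding regular_mono_def factors_uniquely_def ..

lemma factors_uniquely_if_inj_on:
  assumes "inj_on f (topspace T)" "metCH_hom W dW T d u" "\<forall>w\<in>topspace W. f (u w) = k w"
  shows "factors_uniquely W dW T d f k"
  unfolding factors_uniquely_def
  using assms metCH_hom_image by (metis inj_onD)

lemma regular_mono_factors_through_image:
  fixes T :: "'a topology" and S :: "'b topology" and W :: "'w topology"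
  assumes "regular_mono TYPE('c) TYPE('w) T d S e f"
    and "metCH_sep W dW" "metCH_hom W dW S e k" "\<forall>w\<in>topspace W. k w \<in> f ` topspace T"
  shows "factors_uniquely W dW T d f k"
proof -
  obtain g h :: "'b \<Rightarrow> 'c" where eq: "\<forall>x\<in>topspace T. g (f x) = h (f x)"
    and univ: "\<forall>(W :: 'w topology) dW k.
           metCH_sep W dW \<and> metCH_hom W dW S e k \<and> (\<forall>w\<in>topspace W. g (k w) = h (k w)) \<longrightarrow>
           factors_uniquely W dW T d f k"
    using assms(1) unfolding regular_mono_iff by blast
  have "\<forall>w\<in>topspace W. g (k w) = h (k w)"
    using assms(4) eq by fastforce
  with univ assms(2,3) show ?thesis
    by blast
qed

text \<open>Both constant maps from a one-point space lift the same map through f.\<close>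
lemma regular_mono_inj_on:
  fixes T :: "'a topology" and S :: "'b topology"
  assumes "metCH_sep T d" "regular_mono TYPE('c) TYPE('a) T d S e f"
  shows "inj_on f (topspace T)"
proof (rule inj_onI)
  fix x y assume x: "x \<in> topspace T" and y: "y \<in> topspace T" and "f x = f y"
  let ?W = "discrete_topology {x}" and ?dW = "(\<lambda>_ _. 0) :: 'a \<Rightarrow> 'a \<Rightarrow> ennreal"
  have const: "metCH_hom ?W ?dW T d (\<lambda>_. z)" if "z \<in> topspace T" for z
    unfolding metCH_hom_def using that metCH_sep_dist_self[OF assms(1)] by simp
  have f: "metCH_hom T d S e f"
    using assms(2) unfolding regular_mono_def by blast
  then have "e (f x) (f x) \<le> 0"
    using x metCH_sep_dist_self[OF assms(1) x] unfolding metCH_hom_def by metis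
  with metCH_hom_image[OF f x] have "metCH_hom ?W ?dW S e (\<lambda>_. f x)"
    unfolding metCH_hom_def by simp
  from regular_mono_factors_through_image[OF assms(2) metCH_sep_singleton this]
  obtain u where unique: "\<And>u'. metCH_hom ?W ?dW T d u' \<Longrightarrow> f (u' x) = f x \<Longrightarrow> u' x = u x"
    using x unfolding factors_uniquely_def by auto
  have "x = u x" "y = u x"
    using unique[OF const[OF x]] unique[OF const[OF y]] \<open>f x = f y\<close> by simp_all
  then show "x = y"
    by simp
qed

text \<open>The identity of T lifts f, viewed as a map from T with the metric pulled back along f.\<close>
lemma regular_mono_isometric:
  fixes T :: "'a topology" and S :: "'b topology"
  assumes T: "metCH_sep T d" and S: "metCH_sep S e"
    and f: "regular_mono TYPE('c) TYPE('a) T d S e f"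
    and x: "x \<in> topspace T" and y: "y \<in> topspace T"
  shows "e (f x) (f y) = d x y"
proof -
  let ?df = "\<lambda>x y. e (f x) (f y)"
  have hom: "metCH_hom T d S e f"
    using f unfolding regular_mono_def by blast
  have "compact_space T" "Hausdorff_space T" "continuous_map T S f"
    using T hom unfolding metCH_sep_def metCH_hom_def by blast+
  from metCH_sep_pullback[OF S this regular_mono_inj_on[OF T f]]
  have sep: "metCH_sep T ?df" .
  have "metCH_hom T ?df S e f"
    using hom unfolding metCH_hom_def by simp
  from regular_mono_factors_through_image[OF f sep this]
  obtain u where u: "metCH_hom T ?df T d u" "\<forall>w\<in>topspace T. f (u w) = f w"
    unfolding factors_uniquely_def by blast
  have "u w = w" if "w \<in> topspace T" for w
    using inj_onD[OF regular_mono_inj_on[OF T f]] u metCH_hom_image that by metis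
  then have "d x y \<le> e (f x) (f y)"
    using u(1) x y unfolding metCH_hom_def by metis
  moreover have "e (f x) (f y) \<le> d x y"
    using hom x y unfolding metCH_hom_def by blast
  ultimately show ?thesis
    by (rule antisym[rotated])
qed

section \<open>The double of a space along a compact subset\<close>

text \<open>Two copies of S, tagged True and False, glued along A: a point of A survives
  only in the copy True. The topology is the final one for the two copies of S.\<close>
definition double_carrier :: "'b topology \<Rightarrow> 'b set \<Rightarrow> ('b \<times> bool) set" where
  "double_carrier S A = {p. fst p \<in> topspace S \<and> (snd p \<or> fst p \<notin> A)}"

definition double_open :: "'b topology \<Rightarrow> 'b set \<Rightarrow> ('b \<times> bool) set \<Rightarrow> bool" where
  "double_open S A U \<longleftrightarrow> U \<subseteq> double_carrier S A \<and>
     openin S {y \<in> topspace S. (y, True) \<in> U} \<and> openin S {y \<in> topspace S. (y, y \<in> A) \<in> U}"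

definition double_topology :: "'b topology \<Rightarrow> 'b set \<Rightarrow> ('b \<times> bool) topology" where
  "double_topology S A = topology (double_open S A)"

definition double_sheet :: "'b topology \<Rightarrow> 'b set \<Rightarrow> bool \<Rightarrow> ('b \<times> bool) set" where
  "double_sheet S A b = {p \<in> double_carrier S A. fst p \<notin> A \<and> snd p = b}"

lemma istopology_double_open: "istopology (double_open S A)"
  unfolding istopology_def
proof (rule conjI; intro allI impI)
  fix U V assume U: "double_open S A U" and V: "double_open S A V"
  have Int: "{y \<in> topspace S. (y, b y) \<in> U \<inter> V} =
      {y \<in> topspace S. (y, b y) \<in> U} \<inter> {y \<in> topspace S. (y, b y) \<in> V}" for b
    by auto
  from U V show "double_open S A (U \<inter> V)"
    unfolding double_open_def Int by (intro conjI openin_Int) blast+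
next
  fix \<U> assume \<U>: "\<forall>U\<in>\<U>. double_open S A U"
  have "{y \<in> topspace S. (y, b y) \<in> \<Union>\<U>} = (\<Union>U\<in>\<U>. {y \<in> topspace S. (y, b y) \<in> U})" for b
    by auto
  with \<U> show "double_open S A (\<Union>\<U>)"
    unfolding double_open_def by (auto intro!: openin_Union)
qed

lemma openin_double_topology:
  "openin (double_topology S A) U \<longleftrightarrow> U \<subseteq> double_carrier S A \<and>
     openin S {y \<in> topspace S. (y, True) \<in> U} \<and> openin S {y \<in> topspace S. (y, y \<in> A) \<in> U}"
  unfolding double_topology_def topology_inverse'[OF istopology_double_open] double_open_def ..

lemma topspace_double_topology [simp]: "topspace (double_topology S A) = double_carrier S A"
proof -
  have "openin (double_topology S A) (double_carrier S A)"
    unfolding openin_double_topology by (auto simp: double_carrier_def)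
  then have "double_carrier S A \<subseteq> topspace (double_topology S A)"
    by (rule openin_subset)
  moreover have "topspace (double_topology S A) \<subseteq> double_carrier S A"
    using openin_topspace[of "double_topology S A"] unfolding openin_double_topology by blast
  ultimately show ?thesis
    by (rule antisym[rotated])
qed

lemma continuous_map_double_copy_True: "continuous_map S (double_topology S A) (\<lambda>y. (y, True))"
  unfolding continuous_map_def openin_double_topology by (auto simp: double_carrier_def)

lemma continuous_map_double_copy_mem: "continuous_map S (double_topology S A) (\<lambda>y. (y, y \<in> A))"
  unfolding continuous_map_def openin_double_topology by (auto simp: double_carrier_def)

lemma continuous_map_double_fst: "continuous_map (double_topology S A) S fst"
  unfolding continuous_map_def
proof (intro conjI allI impI)
  show "fst \<in> topspace (double_topology S A) \<rightarrow> topspace S"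
    by (auto simp: double_carrier_def)
  fix N assume N: "openin S N"
  have "{y \<in> topspace S. (y, True) \<in> {p \<in> double_carrier S A. fst p \<in> N}} = N"
    "{y \<in> topspace S. (y, y \<in> A) \<in> {p \<in> double_carrier S A. fst p \<in> N}} = N"
    using openin_subset[OF N] by (auto simp: double_carrier_def)
  with N show "openin (double_topology S A) {p \<in> topspace (double_topology S A). fst p \<in> N}"
    unfolding openin_double_topology topspace_double_topology by auto
qed

lemma openin_double_sheet:
  assumes "closedin S A"
  shows "openin (double_topology S A) (double_sheet S A b)"
proof -
  have "openin S (topspace S - A)"
    using assms by blast
  moreover have
    "{y \<in> topspace S. (y, True) \<in> double_sheet S A b} = (if b then topspace S - A else {})"
    "{y \<in> topspace S. (y, y \<in> A) \<in> double_sheet S A b} = (if b then {} else topspace S - A)"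
    by (auto simp: double_sheet_def double_carrier_def)
  ultimately show ?thesis
    unfolding openin_double_topology by (auto simp: double_sheet_def)
qed

lemma compact_space_double:
  assumes "compact_space S"
  shows "compact_space (double_topology S A)"
proof -
  have S: "compactin S (topspace S)"
    using assms by (simp add: compact_space_def)
  have "double_carrier S A = (\<lambda>y. (y, True)) ` topspace S \<union> (\<lambda>y. (y, y \<in> A)) ` topspace S"
    unfolding double_carrier_def by (auto simp: image_iff)
  also have "compactin (double_topology S A) \<dots>"
    using image_compactin[OF S continuous_map_double_copy_True]
      image_compactin[OF S continuous_map_double_copy_mem] by (rule compactin_Un)
  finally show ?thesis
    by (simp add: compact_space_def)
qed

lemma Hausdorff_space_double:
  assumes H: "Hausdorff_space S" and A: "closedin S A"
  shows "Hausdorff_space (double_topology S A)"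
  unfolding Hausdorff_space_def topspace_double_topology
proof (intro allI impI, elim conjE)
  fix p q assume p: "p \<in> double_carrier S A" and q: "q \<in> double_carrier S A" and "p \<noteq> q"
  let ?open = "openin (double_topology S A)"
  show "\<exists>U V. ?open U \<and> ?open V \<and> p \<in> U \<and> q \<in> V \<and> disjnt U V"
  proof (cases "fst p = fst q")
    case False
    moreover have "fst p \<in> topspace S" "fst q \<in> topspace S"
      using p q by (simp_all add: double_carrier_def)
    ultimately obtain N N' where
      N: "openin S N" "openin S N'" "fst p \<in> N" "fst q \<in> N'" "disjnt N N'"
      using H unfolding Hausdorff_space_def by blast
    let ?U = "{x \<in> topspace (double_topology S A). fst x \<in> N}"
    let ?V = "{x \<in> topspace (double_topology S A). fst x \<in> N'}"
    have "?open ?U" "?open ?V"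
      using openin_continuous_map_preimage[OF continuous_map_double_fst N(1)]
        openin_continuous_map_preimage[OF continuous_map_double_fst N(2)] by blast+
    moreover have "p \<in> ?U" "q \<in> ?V" "disjnt ?U ?V"
      using p q N(3-5) by (auto simp: disjnt_def)
    ultimately show ?thesis
      by blast
  next
    case True
    from True \<open>p \<noteq> q\<close> have "snd p \<noteq> snd q"
      by (simp add: prod_eq_iff)
    with True p q have "fst p \<notin> A"
      by (auto simp: double_carrier_def)
    with True p q \<open>snd p \<noteq> snd q\<close> have "p \<in> double_sheet S A (snd p)" "q \<in> double_sheet S A (snd q)"
      "disjnt (double_sheet S A (snd p)) (double_sheet S A (snd q))"
      by (auto simp: double_sheet_def disjnt_def)
    with openin_double_sheet[OF A] show ?thesis
      by blast
  qed
qed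

definition dist_through :: "('b \<Rightarrow> 'b \<Rightarrow> ennreal) \<Rightarrow> 'b set \<Rightarrow> 'b \<Rightarrow> 'b \<Rightarrow> ennreal" where
  "dist_through e A y y' = (INF a\<in>A. e y a + e a y')"

definition double_dist ::
  "('b \<Rightarrow> 'b \<Rightarrow> ennreal) \<Rightarrow> 'b set \<Rightarrow> 'b \<times> bool \<Rightarrow> 'b \<times> bool \<Rightarrow> ennreal" where
  "double_dist e A p q =
     (if snd p = snd q then e (fst p) (fst q) else dist_through e A (fst p) (fst q))"

lemma dist_through_le: "a \<in> A \<Longrightarrow> dist_through e A y y' \<le> e y a + e a y'"
  unfolding dist_through_def by (rule INF_lower)

context
  fixes S :: "'b topology" and e :: "'b \<Rightarrow> 'b \<Rightarrow> ennreal" and A :: "'b set"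
  assumes S: "metCH_sep S e" and A: "compactin S A"
begin

lemma dist_le_dist_through:
  assumes "y \<in> topspace S" "y' \<in> topspace S"
  shows "e y y' \<le> dist_through e A y y'"
  unfolding dist_through_def
proof (rule INF_greatest)
  fix a assume "a \<in> A"
  with compactin_subset_topspace[OF A] have "a \<in> topspace S"
    by blast
  from metCH_sep_triangle[OF S assms(1) this assms(2)] show "e y y' \<le> e y a + e a y'" .
qed

lemma dist_through_eq_dist:
  assumes y: "y \<in> topspace S" and y': "y' \<in> topspace S" and "y \<in> A \<or> y' \<in> A"
  shows "dist_through e A y y' = e y y'"
proof (rule antisym)
  from \<open>y \<in> A \<or> y' \<in> A\<close> show "dist_through e A y y' \<le> e y y'"
    using dist_through_le[of y A e y y'] dist_through_le[of y' A e y y']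
      metCH_sep_dist_self[OF S y] metCH_sep_dist_self[OF S y'] by auto
qed (rule dist_le_dist_through[OF y y'])

lemma dist_through_triangle_left:
  assumes y: "y \<in> topspace S" and z: "z \<in> topspace S" and y': "y' \<in> topspace S"
  shows "dist_through e A y y' \<le> e y z + dist_through e A z y'"
proof -
  have "dist_through e A y y' \<le> dist_through e A z y' + e y z"
    unfolding dist_through_def[of e A z] ennreal_INF_add_const
  proof (rule INF_greatest)
    fix a assume a: "a \<in> A"
    with compactin_subset_topspace[OF A] have "a \<in> topspace S"
      by blast
    have "dist_through e A y y' \<le> e y a + e a y'"
      by (rule dist_through_le[OF a])
    also have "\<dots> \<le> (e y z + e z a) + e a y'"
      using metCH_sep_triangle[OF S y z \<open>a \<in> topspace S\<close>] by (rule add_right_mono)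
    finally show "dist_through e A y y' \<le> e z a + e a y' + e y z"
      by (simp add: ac_simps)
  qed
  then show ?thesis
    by (simp add: add.commute)
qed

lemma dist_through_triangle_right:
  assumes y: "y \<in> topspace S" and z: "z \<in> topspace S" and y': "y' \<in> topspace S"
  shows "dist_through e A y y' \<le> dist_through e A y z + e z y'"
  unfolding dist_through_def[of e A y z] ennreal_INF_add_const
proof (rule INF_greatest)
  fix a assume a: "a \<in> A"
  with compactin_subset_topspace[OF A] have "a \<in> topspace S"
    by blast
  have "dist_through e A y y' \<le> e y a + e a y'"
    by (rule dist_through_le[OF a])
  also have "\<dots> \<le> e y a + (e a z + e z y')"
    using metCH_sep_triangle[OF S \<open>a \<in> topspace S\<close> z y'] by (rule add_left_mono)
  finally show "dist_through e A y y' \<le> e y a + e a z + e z y'"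
    by (simp add: ac_simps)
qed

lemma dist_le_dist_through_add:
  assumes y: "y \<in> topspace S" and z: "z \<in> topspace S" and y': "y' \<in> topspace S"
  shows "e y y' \<le> dist_through e A y z + dist_through e A z y'"
  unfolding dist_through_def[of e A y z] ennreal_INF_add_const
proof (rule INF_greatest)
  fix a assume a: "a \<in> A"
  then have aS: "a \<in> topspace S"
    using compactin_subset_topspace[OF A] by blast
  have "e y y' \<le> e y a + e a y'"
    using metCH_sep_triangle[OF S y aS y'] .
  also have "e a y' = dist_through e A a y'"
    using dist_through_eq_dist[OF aS y'] a by simp
  also have "\<dots> \<le> e a z + dist_through e A z y'"
    by (rule dist_through_triangle_left[OF aS z y'])
  finally show "e y y' \<le> e y a + e a z + dist_through e A z y'"
    by (simp add: add.assoc add_left_mono)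
qed

lemma dist_through_zero:
  assumes y: "y \<in> topspace S" and y': "y' \<in> topspace S" and "dist_through e A y y' = 0"
  shows "\<exists>a\<in>A. e y a = 0 \<and> e a y' = 0"
proof -
  have "A \<noteq> {}"
    using assms(3) unfolding dist_through_def by auto
  moreover have "continuous_map S upper_topology (\<lambda>a. e y a + e a y')"
    using y y' by (intro continuous_map_upper_topology_add continuous_map_metCH_dist[OF S]) auto
  ultimately obtain a where "a \<in> A" "e y a + e a y' = dist_through e A y y'"
    unfolding dist_through_def using continuous_map_upper_topology_attains_INF[OF A] by blast
  with assms(3) show ?thesis
    by auto
qed

lemma continuous_map_dist_through:
  assumes f: "continuous_map X S f" and g: "continuous_map X S g"
  shows "continuous_map X upper_topology (\<lambda>x. dist_through e A (f x) (g x))"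
proof -
  have "continuous_map (prod_topology X S) S (\<lambda>p. f (fst p))"
    "continuous_map (prod_topology X S) S (\<lambda>p. g (fst p))"
    using continuous_map_compose[OF continuous_map_fst f]
      continuous_map_compose[OF continuous_map_fst g]
    by (simp_all add: o_def)
  then have "continuous_map (prod_topology X S) upper_topology
      (\<lambda>p. e (f (fst p)) (snd p) + e (snd p) (g (fst p)))"
    by (intro continuous_map_upper_topology_add continuous_map_metCH_dist[OF S] continuous_map_snd)
  from continuous_map_upper_topology_INF_compact[OF this A]
  show ?thesis
    unfolding dist_through_def by simp
qed

lemma dist_le_double_dist:
  "p \<in> double_carrier S A \<Longrightarrow> q \<in> double_carrier S A \<Longrightarrow> e (fst p) (fst q) \<le> double_dist e A p q"
  unfolding double_dist_def double_carrier_def using dist_le_dist_through by auto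

lemma double_dist_eq_dist:
  "p \<in> double_carrier S A \<Longrightarrow> q \<in> double_carrier S A \<Longrightarrow> fst p \<in> A \<or> fst q \<in> A \<Longrightarrow>
    double_dist e A p q = e (fst p) (fst q)"
  unfolding double_dist_def double_carrier_def using dist_through_eq_dist by auto

lemma double_dist_triangle:
  assumes "p \<in> double_carrier S A" "m \<in> double_carrier S A" "q \<in> double_carrier S A"
  shows "double_dist e A p q \<le> double_dist e A p m + double_dist e A m q"
proof -
  have "fst p \<in> topspace S" "fst m \<in> topspace S" "fst q \<in> topspace S"
    using assms by (simp_all add: double_carrier_def)
  note facts = metCH_sep_triangle[OF S this] dist_through_triangle_left[OF this]
    dist_through_triangle_right[OF this] dist_le_dist_through_add[OF this]
  show ?thesis
    unfolding double_dist_def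
    by (cases "snd p"; cases "snd m"; cases "snd q") (simp_all add: facts)
qed

lemma double_dist_separated:
  assumes p: "p \<in> double_carrier S A" and q: "q \<in> double_carrier S A"
    and pq: "double_dist e A p q = 0" and qp: "double_dist e A q p = 0"
  shows "p = q"
proof (cases "snd p = snd q")
  case True
  with assms metCH_sep_separated[OF S] show ?thesis
    unfolding double_dist_def double_carrier_def by (simp add: prod_eq_iff)
next
  case False
  have y: "fst p \<in> topspace S" and y': "fst q \<in> topspace S"
    using p q by (simp_all add: double_carrier_def)
  text \<open>Both points are at distance zero from points of A, which are then all equal;
    so the point tagged False lies in A, which is impossible.\<close>
  obtain a where a: "a \<in> A" "e (fst p) a = 0" "e a (fst q) = 0"
    using dist_through_zero[OF y y'] pq False unfolding double_dist_def by auto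
  obtain b where b: "b \<in> A" "e (fst q) b = 0" "e b (fst p) = 0"
    using dist_through_zero[OF y' y] qp False unfolding double_dist_def by auto
  have aS: "a \<in> topspace S" and bS: "b \<in> topspace S"
    using a b compactin_subset_topspace[OF A] by auto
  have "e a b = 0" "e b a = 0"
    using metCH_sep_triangle[OF S aS y' bS] metCH_sep_triangle[OF S bS y aS] a b by simp_all
  then have "a = b"
    using metCH_sep_separated[OF S aS bS] by blast
  then have "fst p = a" "fst q = a"
    using metCH_sep_separated[OF S y aS] metCH_sep_separated[OF S y' aS] a b by simp_all
  with p q False a(1) show ?thesis
    unfolding double_carrier_def by auto
qed

text \<open>Near a point of A the distance is bounded below by the lower semicontinuous
  function e, with equality at that point; away from A each pair of copies is open and
  carries a fixed formula.\<close>
lemma continuous_map_double_dist: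
  "continuous_map (prod_topology (double_topology S A) (double_topology S A)) upper_topology
     (\<lambda>(p, q). double_dist e A p q)"
proof (rule continuous_map_upper_topology_localI)
  let ?P = "prod_topology (double_topology S A) (double_topology S A)"
  have fst_fst: "continuous_map ?P S (\<lambda>w. fst (fst w))"
    and fst_snd: "continuous_map ?P S (\<lambda>w. fst (snd w))"
    using continuous_map_compose[OF continuous_map_fst continuous_map_double_fst]
      continuous_map_compose[OF continuous_map_snd continuous_map_double_fst]
    by (simp_all add: o_def)
  let ?E = "\<lambda>w. e (fst (fst w)) (fst (snd w))"
    and ?D = "\<lambda>w. dist_through e A (fst (fst w)) (fst (snd w))"
  have E: "continuous_map ?P upper_topology ?E"
    using continuous_map_metCH_dist[OF S fst_fst fst_snd] .
  have D: "continuous_map ?P upper_topology ?D"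
    using continuous_map_dist_through[OF fst_fst fst_snd] .
  let ?d = "\<lambda>(p, q). double_dist e A p q"
  fix w u assume w: "w \<in> topspace ?P" and u: "u < ?d w"
  obtain p q where pq: "w = (p, q)" "p \<in> double_carrier S A" "q \<in> double_carrier S A"
    using w by (cases w) simp
  show "\<exists>U. openin ?P U \<and> w \<in> U \<and> (\<forall>z\<in>U. u < ?d z)"
  proof (cases "fst p \<in> A \<or> fst q \<in> A")
    case True
    have "?E w = ?d w"
      using double_dist_eq_dist[OF pq(2,3) True] by (simp add: pq(1))
    moreover have "\<forall>z\<in>topspace ?P. ?E z \<le> ?d z"
      using dist_le_double_dist by auto
    ultimately show ?thesis
      using continuous_map_upper_topology_minorant[OF E openin_topspace w] u by blast
  next
    case False
    let ?G = "if snd p = snd q then ?E else ?D"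
    let ?O = "double_sheet S A (snd p) \<times> double_sheet S A (snd q)"
    have G: "continuous_map ?P upper_topology ?G"
      using E D by simp
    have "closedin S A"
      using compactin_imp_closedin[OF _ A] S by (simp add: metCH_sep_def)
    then have sheets: "openin ?P ?O"
      by (simp add: openin_prod_Times_iff openin_double_sheet)
    have w_sheets: "w \<in> ?O"
      using pq False by (auto simp: double_sheet_def)
    have eq: "?G z = ?d z" if "z \<in> ?O" for z
      using that by (auto simp: double_dist_def double_sheet_def)
    then have "\<forall>z\<in>?O. ?G z \<le> ?d z"
      by simp
    with eq[OF w_sheets] show ?thesis
      using continuous_map_upper_topology_minorant[OF G sheets w_sheets] u by blast
  qed
qed

lemma metCH_sep_double: "metCH_sep (double_topology S A) (double_dist e A)"
proof -
  have "compact_space S" "Hausdorff_space S"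
    using S by (simp_all add: metCH_sep_def)
  moreover have "double_dist e A p p = 0" if "p \<in> double_carrier S A" for p
    using that metCH_sep_dist_self[OF S] by (simp add: double_dist_def double_carrier_def)
  ultimately show ?thesis
    unfolding metCH_sep_def
    using compact_space_double Hausdorff_space_double compactin_imp_closedin[OF _ A]
      double_dist_triangle double_dist_separated continuous_map_double_dist
    by auto
qed

lemma metCH_hom_double_copy_True:
  "metCH_hom S e (double_topology S A) (double_dist e A) (\<lambda>y. (y, True))"
  unfolding metCH_hom_def double_dist_def by (simp add: continuous_map_double_copy_True)

lemma metCH_hom_double_copy_mem:
  "metCH_hom S e (double_topology S A) (double_dist e A) (\<lambda>y. (y, y \<in> A))"
  unfolding metCH_hom_def double_dist_def
  using continuous_map_double_copy_mem dist_through_eq_dist by auto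

end

section \<open>Embeddings are regular monomorphisms\<close>

lemma metCH_embedding_factors_through_image:
  fixes T :: "'a topology" and S :: "'b topology" and W :: "'w topology"
  assumes T: "compact_space T" and S: "Hausdorff_space S" and f: "metCH_embedding T d S e f"
    and k: "metCH_hom W dW S e k" and image: "\<forall>w\<in>topspace W. k w \<in> f ` topspace T"
  shows "factors_uniquely W dW T d f k"
proof -
  have fc: "continuous_map T S f" and inj: "inj_on f (topspace T)"
    and iso: "\<forall>x\<in>topspace T. \<forall>y\<in>topspace T. e (f x) (f y) = d x y"
    using f unfolding metCH_embedding_def metCH_hom_def by blast+
  let ?A = "f ` topspace T"
  have "homeomorphic_map T (subtopology S ?A) f"
  proof (rule continuous_imp_homeomorphic_map)
    show "continuous_map T (subtopology S ?A) f"
      using fc by (simp add: continuous_map_in_subtopology)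
    show "f ` topspace T = topspace (subtopology S ?A)"
      using continuous_map_image_subset_topspace[OF fc] by auto
  qed (use T S inj in \<open>simp_all add: Hausdorff_space_subtopology\<close>)
  then obtain f' where f': "homeomorphic_maps T (subtopology S ?A) f f'"
    using homeomorphic_map_maps by blast
  have kc: "continuous_map W (subtopology S ?A) k"
    using k image unfolding metCH_hom_def continuous_map_in_subtopology by blast
  define u where "u = f' \<circ> k"
  have uc: "continuous_map W T u"
    unfolding u_def using continuous_map_compose[OF kc] f' homeomorphic_maps_def by blast
  have fu: "\<forall>w\<in>topspace W. f (u w) = k w"
    using f' image continuous_map_image_subset_topspace[OF fc]
    unfolding u_def homeomorphic_maps_def by auto
  have hom: "metCH_hom W dW T d u"
    unfolding metCH_hom_def
  proof (intro conjI ballI uc)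
    fix x y assume "x \<in> topspace W" "y \<in> topspace W"
    moreover have "u x \<in> topspace T" "u y \<in> topspace T"
      using uc calculation continuous_map_image_subset_topspace by blast+
    ultimately show "d (u x) (u y) \<le> dW x y"
      using iso fu k unfolding metCH_hom_def by metis
  qed
  from inj hom fu show ?thesis
    by (rule factors_uniquely_if_inj_on)
qed

text \<open>f equalizes the two copies of S in the double of S along the image of f.\<close>
lemma metCH_embedding_regular_mono:
  fixes T :: "'a topology" and S :: "'b topology"
  assumes T: "metCH_sep T d" and S: "metCH_sep S e" and f: "metCH_embedding T d S e f"
  shows "regular_mono TYPE('b \<times> bool) TYPE('w) T d S e f"
proof -
  let ?A = "f ` topspace T"
  have fhom: "metCH_hom T d S e f"
    using f unfolding metCH_embedding_def by blast
  have "compact_space T" "Hausdorff_space S"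
    using T S unfolding metCH_sep_def by blast+
  have A: "compactin S ?A"
    using image_compactin[of T "topspace T" S f] fhom \<open>compact_space T\<close>
    unfolding metCH_hom_def compact_space_def by blast
  have "factors_uniquely W dW T d f k"
    if "metCH_sep W dW" "metCH_hom W dW S e k" "\<forall>w\<in>topspace W. (k w, True) = (k w, k w \<in> ?A)"
    for W :: "'w topology" and dW k
    using metCH_embedding_factors_through_image[OF \<open>compact_space T\<close> \<open>Hausdorff_space S\<close> f]
      that(2,3) by simp
  moreover have "\<forall>x\<in>topspace T. (f x, True) = (f x, f x \<in> ?A)"
    by simp
  ultimately show ?thesis
    unfolding regular_mono_iff
    using fhom metCH_sep_double[OF S A] metCH_hom_double_copy_True[OF S A]
      metCH_hom_double_copy_mem[OF S A] by blast
qed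

theorem proposition4p5:
  fixes T :: "'a topology" and d :: "'a \<Rightarrow> 'a \<Rightarrow> ennreal"
    and S :: "'b topology" and e :: "'b \<Rightarrow> 'b \<Rightarrow> ennreal"
    and f :: "'a \<Rightarrow> 'b"
  assumes "metCH_sep T d" and "metCH_sep S e" and "metCH_hom T d S e f"
  shows "(regular_mono TYPE('c) TYPE('a) T d S e f \<longrightarrow> metCH_embedding T d S e f) \<and>
         (metCH_embedding T d S e f \<longrightarrow> regular_mono TYPE('b \<times> bool) TYPE('w) T d S e f)"
proof (intro conjI impI)
  assume f: "regular_mono TYPE('c) TYPE('a) T d S e f"
  show "metCH_embedding T d S e f"
    unfolding metCH_embedding_def
    using assms(3) regular_mono_inj_on[OF assms(1) f] regular_mono_isometric[OF assms(1,2) f]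
    by blast
next
  assume "metCH_embedding T d S e f"
  with assms(1,2) show "regular_mono TYPE('b \<times> bool) TYPE('w) T d S e f"
    by (rule metCH_embedding_regular_mono)
qed

end
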